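(* Let $V,Y$ be real Banach spaces with $V\hookrightarrow Y$ continuously and densely, $U\subset V$ open, $m\in\mathbb{N}$, $\mathcal{E}\colon U\to\mathbb{R}$ and $\mathcal{G}\colon U\to\mathbb{R}^m$ analytic, $\mathcal{M}=\{u\in U\mid\mathcal{G}(u)=0\}$, $\bar u\in U$. Assume: $\mathcal{E}'(u)\in Y^\ast$ for all $u$ and $u\mapsto\mathcal{E}'(u)$ is analytic $U\to Y^\ast$; each $\mathcal{G}'(u)$ extends to $\overline{\mathcal{G}'(u)}\in\mathcal{L}(Y,\mathbb{R}^m)$ with $u\mapsto\overline{\mathcal{G}'(u)}$ analytic; $\mathcal{G}(\bar u)=0$ and $\mathcal{G}'(\bar u)$ surjective. Let $V_0=\ker\mathcal{G}'(\bar u)$, $V_1$ a closed complement, $\Omega_0\subset V_0$, $\Omega_1\subset V_1$ open with $\bar u\in\Omega=\Omega_0+\Omega_1\subset U$, $\psi\colon\Omega_0\to V$ analytic with $\psi(\Omega_0)\subset\Omega_1$, $\mathcal{M}\cap\Omega=\{\omega+\psi(\omega)\mid\omega\in\Omega_0\}$, and $\mathcal{G}'(u)|_{V_1}$ an isomorphism onto $\mathbb{R}^m$ for all $u\in\Omega$. Let $\varphi(\omega)=\omega+\psi(\omega)$, $\bar\omega\in\Omega_0$ with $\varphi(\bar\omega)=\bar u$, $\mathcal{F}=\mathcal{E}\circ\varphi$, and regard $\mathcal{F}'(\omega)$ as an element of $\overline{V_0}^\ast$ via its continuous extension to the $Y$-closure $\overline{V_0}$ of $V_0$. Then the following are equivalent: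 (i) there exist $C,\sigma'>0$ and $\theta\in(0,\tfrac12]$ with $|\mathcal{F}(\omega)-\mathcal{F}(\bar\omega)|^{1-\theta}\le C\|\mathcal{F}'(\omega)\|_{\overline{V_0}^\ast}$ for all $\omega\in\Omega_0$ with $\|\omega-\bar\omega\|_V\le\sigma'$; (ii) there exist $C,\sigma>0$ and $\theta\in(0,\tfrac12]$ with $|\mathcal{E}(u)-\mathcal{E}(\bar u)|^{1-\theta}\le C\|\mathcal{E}'(u)\|_{\overline{\mathcal{T}_u\mathcal{M}}^\ast}$ for all $u\in\mathcal{M}$ with $\|u-\bar u\|_V\le\sigma$.
   Context: $\mathcal{T}_u\mathcal{M}=\{\gamma'(0)\mid\gamma\in C^1((-\varepsilon,\varepsilon);V),\ \gamma(t)\in\mathcal{M}\cap\Omega,\ \gamma(0)=u\}$; $\overline{\mathcal{T}_u\mathcal{M}}$ is its closure in $Y$, and $\|\mathcal{E}'(u)\|_{\overline{\mathcal{T}_u\mathcal{M}}^\ast}=\sup_{0\ne y\in\overline{\mathcal{T}_u\mathcal{M}}}\mathcal{E}'(u)y/\|y\|_Y$; similarly $\|\mathcal{F}'(\omega)\|_{\overline{V_0}^\ast}=\sup_{0\ne y\in\overline{V_0}}\mathcal{F}'(\omega)y/\|y\|_Y$. Analytic means locally given by norm-convergent power series of continuous multilinear maps. *)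

theory Defs
  imports "HOL-Analysis.Analysis"
begin

text \<open>A k-linear map on a subspace D, represented as a function of argument lists
  of length k: linear in each slot when all arguments lie in D.\<close>
definition multilinear_on :: "'a::real_vector set \<Rightarrow> nat \<Rightarrow> ('a list \<Rightarrow> 'b::real_vector) \<Rightarrow> bool" where
  "multilinear_on D k A \<longleftrightarrow>
     (\<forall>xs i a b c. length xs = k \<and> set xs \<subseteq> D \<and> i < k \<and> a \<in> D \<and> b \<in> D \<longrightarrow>
        A (xs[i := a + b]) = A (xs[i := a]) + A (xs[i := b]) \<and>
        A (xs[i := c *\<^sub>R a]) = c *\<^sub>R A (xs[i := a]))"

text \<open>Analyticity of f on S \<subseteq> D (D the ambient domain subspace): locally around each
  point, f is given by a power series of continuous multilinear maps on D whose
  operator norms (bounded by M k) give a convergent series M k * r^k.\<close>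
definition analytic_in :: "'a::real_normed_vector set \<Rightarrow> 'a set \<Rightarrow> ('a \<Rightarrow> 'b::real_normed_vector) \<Rightarrow> bool" where
  "analytic_in D S f \<longleftrightarrow>
     (\<forall>x\<in>S. \<exists>r>0. \<exists>A M.
        (\<forall>k. multilinear_on D k (A k)) \<and>
        (\<forall>k xs. length xs = k \<and> set xs \<subseteq> D \<longrightarrow> norm (A k xs) \<le> M k * prod_list (map norm xs)) \<and>
        summable (\<lambda>k. M k * r ^ k) \<and>
        (\<forall>h\<in>D. norm h < r \<longrightarrow> x + h \<in> S \<and> (\<lambda>k. A k (replicate k h)) sums f (x + h)))"

text \<open>Dual norm of a functional restricted to S: sup of l y / norm y over nonzero y in S
  (convention: 0 if S has no nonzero element).\<close>
definition dual_norm_on :: "'y::real_normed_vector set \<Rightarrow> ('y \<Rightarrow> real) \<Rightarrow> real" where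
  "dual_norm_on S l = (if S \<subseteq> {0} then 0 else (SUP y\<in>S - {0}. l y / norm y))"

definition tangent_space :: "'v::real_normed_vector set \<Rightarrow> 'v set \<Rightarrow> 'v \<Rightarrow> 'v set" where
  "tangent_space M \<Omega> u = {v. \<exists>\<epsilon>>0. \<exists>\<gamma> \<gamma>'.
      (\<forall>t\<in>{-\<epsilon><..<\<epsilon>}. (\<gamma> has_vector_derivative \<gamma>' t) (at t) \<and> \<gamma> t \<in> M \<inter> \<Omega>) \<and>
      continuous_on {-\<epsilon><..<\<epsilon>} \<gamma>' \<and> \<gamma> 0 = u \<and> v = \<gamma>' 0}"

end

theory Submission
  imports Defs
begin

(* The chart \<phi> \<omega> = \<omega> + \<psi> \<omega> parametrises M near ubar by \<Omega>0, and its tangent spaces are the graphs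
   {h + D\<psi> \<omega> h | h \<in> V0}. By the chain rule F'(\<omega>) h = E'(\<phi> \<omega>) (h + D\<psi> \<omega> h), so the two dual
   norms are comparable as soon as the Y-norms of J h and J (h + D\<psi> \<omega> h) are. The component
   D\<psi> \<omega> h lies in V1, where G'(ubar) is invertible, and G'(\<phi> \<omega>) (h + D\<psi> \<omega> h) = 0. Hence
   norm (J h) \<le> c * norm (J (h + D\<psi> \<omega> h)) for all \<omega>, and norm (J (h + D\<psi> \<omega> h)) \<le> 2 * norm (J h)
   for \<phi> \<omega> near ubar, where G'(\<phi> \<omega>) is close to G'(ubar). Since \<phi> and the projection P0 onto V0
   along V1 are continuous, each Lojasiewicz inequality pulls back along one of them to the other. *)

section \<open>Derivatives within relatively open subsets of subspaces\<close>

lemma openin_subspace_line: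
  fixes V :: "'a::real_normed_vector set"
  assumes "openin (top_of_set V) W" "subspace V" "w \<in> W" "h \<in> V"
  obtains e where "e > 0" "\<And>t. \<bar>t\<bar> < e \<Longrightarrow> w + t *\<^sub>R h \<in> W"
proof -
  have WV: "W \<subseteq> V" and balls: "\<forall>x\<in>W. \<exists>e>0. ball x e \<inter> V \<subseteq> W"
    using assms(1) by (simp_all add: openin_contains_ball)
  obtain d where d: "d > 0" "ball w d \<inter> V \<subseteq> W" using balls assms(3) by blast
  have wV: "w \<in> V" using WV assms(3) by blast
  show ?thesis
  proof
    show "d / (norm h + 1) > 0" using d by (simp add: add_nonneg_pos)
    fix t :: real assume t: "\<bar>t\<bar> < d / (norm h + 1)"
    have "norm (t *\<^sub>R h) \<le> \<bar>t\<bar> * (norm h + 1)" by (simp add: mult_left_mono)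
    also have "\<dots> < d" using t by (simp add: pos_less_divide_eq add_nonneg_pos)
    finally have "w + t *\<^sub>R h \<in> ball w d" by (simp add: dist_norm)
    moreover have "w + t *\<^sub>R h \<in> V" using wV assms(2,4) by (simp add: subspace_add subspace_scale)
    ultimately show "w + t *\<^sub>R h \<in> W" using d by auto
  qed
qed

lemma has_derivative_within_openin_unique:
  fixes f :: "'a::real_normed_vector \<Rightarrow> 'b::real_normed_vector"
  assumes f1: "(f has_derivative f1) (at x within W)" and f2: "(f has_derivative f2) (at x within W)"
    and W: "openin (top_of_set V) W" "subspace V" and x: "x \<in> W" and h: "h \<in> V"
  shows "f1 h = f2 h"
proof -
  obtain e where e: "e > 0" "\<And>t. \<bar>t\<bar> < e \<Longrightarrow> x + t *\<^sub>R h \<in> W"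
    using openin_subspace_line[OF W x h] by blast
  define p where "p = (\<lambda>t::real. x + t *\<^sub>R h)"
  have p: "(p has_derivative (\<lambda>t. t *\<^sub>R h)) (at 0 within ball 0 e)"
    unfolding p_def by (intro derivative_eq_intros) auto
  have pW: "p ` ball 0 e \<subseteq> W" using e by (auto simp: p_def)
  have p0: "p 0 = x" by (simp add: p_def)
  have at0: "at (0::real) within ball 0 e = at 0" using e by (intro at_within_open) auto
  have "(f \<circ> p has_derivative f1 \<circ> (\<lambda>t. t *\<^sub>R h)) (at 0)"
    using diff_chain_within[OF p has_derivative_subset[OF f1 pW, folded p0]] by (simp add: at0)
  moreover have "(f \<circ> p has_derivative f2 \<circ> (\<lambda>t. t *\<^sub>R h)) (at 0)"
    using diff_chain_within[OF p has_derivative_subset[OF f2 pW, folded p0]] by (simp add: at0)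
  ultimately have "f1 \<circ> (\<lambda>t. t *\<^sub>R h) = f2 \<circ> (\<lambda>t. t *\<^sub>R h)"
    by (rule has_derivative_unique)
  from fun_cong[OF this, of 1] show ?thesis by simp
qed

section \<open>Analytic maps are differentiable\<close>

lemma multilinear_onD:
  assumes "multilinear_on D k A" "length xs = k" "set xs \<subseteq> D" "i < k" "a \<in> D" "b \<in> D"
  shows "A (xs[i := a + b]) = A (xs[i := a]) + A (xs[i := b])"
    and "A (xs[i := c *\<^sub>R a]) = c *\<^sub>R A (xs[i := a])"
  using assms unfolding multilinear_on_def by blast+

lemma multilinear_on_1:
  assumes "multilinear_on D 1 A" "a \<in> D" "b \<in> D"
  shows "A [a + b] = A [a] + A [b]" and "A [c *\<^sub>R a] = c *\<^sub>R A [a]"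
  using multilinear_onD(1)[of D 1 A "[a]" 0 a b] multilinear_onD(2)[of D 1 A "[a]" 0 a b c] assms
  by simp_all

lemma multilinear_on_replicate_zero:
  assumes "multilinear_on D k A" "0 < k" "0 \<in> D"
  shows "A (replicate k 0) = 0"
  using multilinear_onD(2)[OF assms(1), of "replicate k 0" 0 0 0 0] assms(2,3)
  by (cases k) (auto simp: set_replicate_conv_if)

lemma summable_tail_quadratic_bound:
  fixes a :: "nat \<Rightarrow> 'b::banach"
  assumes sm: "summable (\<lambda>k. M k * r ^ k)" and a: "\<And>k. norm (a k) \<le> M k * t ^ k"
    and t: "0 < t" "t \<le> r"
  shows "norm (\<Sum>k. a (k + 2)) \<le> (\<Sum>k. M (k + 2) * r ^ (k + 2)) / r\<^sup>2 * t\<^sup>2"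
proof -
  define c where "c = t\<^sup>2 / r\<^sup>2"
  have M: "0 \<le> M k" for k
  proof -
    have "0 \<le> M k * t ^ k" using order_trans[OF norm_ge_zero a[of k]] .
    moreover have "0 < t ^ k" using t by simp
    ultimately show ?thesis by (simp add: zero_le_mult_iff)
  qed
  have sm2: "summable (\<lambda>k. M (k + 2) * r ^ (k + 2))"
    using summable_ignore_initial_segment[OF sm, of 2] by simp
  have a2: "norm (a (k + 2)) \<le> c * (M (k + 2) * r ^ (k + 2))" for k
  proof -
    have "norm (a (k + 2)) \<le> M (k + 2) * (t ^ k * t\<^sup>2)"
      using a[of "k + 2"] by (simp only: power_add)
    also have "\<dots> \<le> M (k + 2) * (r ^ k * t\<^sup>2)"
      using t M by (intro mult_left_mono mult_right_mono power_mono) auto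
    also have "\<dots> = c * (M (k + 2) * r ^ (k + 2))"
      using t by (simp add: c_def power_add field_simps power2_eq_square)
    finally show ?thesis .
  qed
  have smc: "summable (\<lambda>k. c * (M (k + 2) * r ^ (k + 2)))" using sm2 by (rule summable_mult)
  have smn: "summable (\<lambda>k. norm (a (k + 2)))"
    using a2 by (intro summable_comparison_test[OF _ smc]) auto
  have "norm (\<Sum>k. a (k + 2)) \<le> (\<Sum>k. norm (a (k + 2)))" by (rule summable_norm[OF smn])
  also have "\<dots> \<le> (\<Sum>k. c * (M (k + 2) * r ^ (k + 2)))" by (rule suminf_le[OF a2 smn smc])
  also have "\<dots> = c * (\<Sum>k. M (k + 2) * r ^ (k + 2))" by (rule suminf_mult[OF sm2])
  finally show ?thesis by (simp add: c_def mult.commute)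
qed

lemma analytic_inE:
  assumes "analytic_in D S f" "x \<in> S"
  obtains r A M where "r > 0" and "\<And>k. multilinear_on D k (A k)"
    and "\<And>k xs. length xs = k \<Longrightarrow> set xs \<subseteq> D \<Longrightarrow> norm (A k xs) \<le> M k * prod_list (map norm xs)"
    and "summable (\<lambda>k. M k * r ^ k)"
    and "\<And>h. h \<in> D \<Longrightarrow> norm h < r \<Longrightarrow> x + h \<in> S \<and> (\<lambda>k. A k (replicate k h)) sums f (x + h)"
proof -
  have "\<exists>r>0. \<exists>A M. (\<forall>k. multilinear_on D k (A k)) \<and>
      (\<forall>k xs. length xs = k \<and> set xs \<subseteq> D \<longrightarrow> norm (A k xs) \<le> M k * prod_list (map norm xs)) \<and>
      summable (\<lambda>k. M k * r ^ k) \<and>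
      (\<forall>h\<in>D. norm h < r \<longrightarrow> x + h \<in> S \<and> (\<lambda>k. A k (replicate k h)) sums f (x + h))"
    using assms unfolding analytic_in_def by blast
  then show thesis using that by blast
qed

lemma analytic_in_first_order:
  fixes f :: "'a::real_normed_vector \<Rightarrow> 'b::banach"
  assumes an: "analytic_in D S f" and x: "x \<in> S" and D0: "0 \<in> D"
  obtains r L K where "r > 0"
    and "\<And>a b. a \<in> D \<Longrightarrow> b \<in> D \<Longrightarrow> L (a + b) = L a + L b"
    and "\<And>c a. a \<in> D \<Longrightarrow> L (c *\<^sub>R a) = c *\<^sub>R L a"
    and "\<And>h. h \<in> D \<Longrightarrow> norm (L h) \<le> K * norm h"
    and "\<And>h. h \<in> D \<Longrightarrow> norm h < r \<Longrightarrow> x + h \<in> S \<and> norm (f (x + h) - f x - L h) \<le> K * (norm h)\<^sup>2"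
proof -
  obtain r A M where r: "r > 0" and ml: "\<And>k. multilinear_on D k (A k)"
    and bd: "\<And>k xs. length xs = k \<Longrightarrow> set xs \<subseteq> D \<Longrightarrow> norm (A k xs) \<le> M k * prod_list (map norm xs)"
    and sm: "summable (\<lambda>k. M k * r ^ k)"
    and ser: "\<And>h. h \<in> D \<Longrightarrow> norm h < r \<Longrightarrow> x + h \<in> S \<and> (\<lambda>k. A k (replicate k h)) sums f (x + h)"
    using analytic_inE[OF an x] by blast
  define L where "L h = A 1 [h]" for h
  define K where "K = max (M 1) ((\<Sum>k. M (k + 2) * r ^ (k + 2)) / r\<^sup>2)"
  have fx: "f x = A 0 []"
  proof -
    have "(\<lambda>k. A k (replicate k 0)) sums f x" using ser[OF D0] r by simp
    moreover have "(\<lambda>k. A k (replicate k 0)) = (\<lambda>k. if k = 0 then A 0 [] else 0)"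
      using multilinear_on_replicate_zero[OF ml _ D0] by (auto simp: fun_eq_iff)
    ultimately show ?thesis using sums_single[of 0 "\<lambda>_. A 0 []"] sums_unique2 by fastforce
  qed
  have L_bound: "norm (L h) \<le> K * norm h" if "h \<in> D" for h
  proof -
    have "norm (L h) \<le> M 1 * norm h" using bd[of "[h]" 1] that by (simp add: L_def)
    also have "\<dots> \<le> K * norm h" by (simp add: K_def mult_right_mono)
    finally show ?thesis .
  qed
  have remainder: "norm (f (x + h) - f x - L h) \<le> K * (norm h)\<^sup>2" if h: "h \<in> D" "norm h < r" for h
  proof (cases "h = 0")
    case True
    then show ?thesis using multilinear_on_replicate_zero[OF ml _ D0, of 1] by (simp add: L_def)
  next
    case False
    define a where "a = (\<lambda>k. A k (replicate k h))"
    have "a sums f (x + h)" using ser h by (simp add: a_def)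
    then have "(\<lambda>k. a (k + 2)) sums (f (x + h) - (f x + L h))"
      using sums_split_initial_segment[of a _ 2] by (simp add: numeral_2_eq_2 a_def fx L_def)
    then have "f (x + h) - f x - L h = (\<Sum>k. a (k + 2))" by (simp add: sums_iff algebra_simps)
    moreover have "norm (a k) \<le> M k * norm h ^ k" for k
      using bd[of "replicate k h" k] h by (auto simp: a_def prod_list_replicate set_replicate_conv_if)
    then have "norm (\<Sum>k. a (k + 2)) \<le> (\<Sum>k. M (k + 2) * r ^ (k + 2)) / r\<^sup>2 * (norm h)\<^sup>2"
      using False h by (intro summable_tail_quadratic_bound[OF sm]) auto
    also have "\<dots> \<le> K * (norm h)\<^sup>2"
      by (rule mult_right_mono) (simp_all add: K_def)
    ultimately show ?thesis by simp
  qed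
  show ?thesis
  proof (rule that[of r L K])
    fix a b assume "a \<in> D" "b \<in> D"
    then show "L (a + b) = L a + L b" unfolding L_def by (rule multilinear_on_1(1)[OF ml])
  next
    fix c a assume "a \<in> D"
    then show "L (c *\<^sub>R a) = c *\<^sub>R L a" unfolding L_def by (rule multilinear_on_1(2)[OF ml _ D0])
  qed (use r L_bound remainder ser in blast)+
qed

lemma bounded_linear_compose_projection:
  assumes L_add: "\<And>a b. a \<in> D \<Longrightarrow> b \<in> D \<Longrightarrow> L (a + b) = L a + L b"
    and L_scale: "\<And>c a. a \<in> D \<Longrightarrow> L (c *\<^sub>R a) = c *\<^sub>R L a"
    and L_bound: "\<And>h. h \<in> D \<Longrightarrow> norm (L h) \<le> K * norm h"
    and P: "bounded_linear P" "\<And>y. P y \<in> D"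
  shows "bounded_linear (\<lambda>y. L (P y))"
proof -
  interpret P: bounded_linear P by (fact P(1))
  obtain KP where KP: "KP > 0" "\<And>y. norm (P y) \<le> norm y * KP" using P.pos_bounded by blast
  show ?thesis
  proof
    fix a b show "L (P (a + b)) = L (P a) + L (P b)" using L_add P(2) by (simp add: P.add)
  next
    fix c a show "L (P (c *\<^sub>R a)) = c *\<^sub>R L (P a)" using L_scale P(2) by (simp add: P.scale)
  next
    have "norm (L (P y)) \<le> norm y * (\<bar>K\<bar> * KP)" for y
    proof -
      have "norm (L (P y)) \<le> \<bar>K\<bar> * norm (P y)"
        using L_bound[OF P(2)] by (meson abs_ge_self mult_right_mono norm_ge_zero order_trans)
      also have "\<dots> \<le> \<bar>K\<bar> * (norm y * KP)" using KP(2) by (simp add: mult_left_mono)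
      finally show ?thesis by (simp add: ac_simps)
    qed
    then show "\<exists>C. \<forall>y. norm (L (P y)) \<le> norm y * C" by blast
  qed
qed

text \<open>The derivative is the first-order term of the expansion on D, extended to the whole space
  through the projection P onto D.\<close>
lemma analytic_in_has_derivative:
  fixes f :: "'a::real_normed_vector \<Rightarrow> 'b::banach"
  assumes an: "analytic_in D S f" and x: "x \<in> S" and D: "subspace D" "S \<subseteq> D"
    and P: "bounded_linear P" "\<And>y. P y \<in> D" "\<And>y. y \<in> D \<Longrightarrow> P y = y"
  obtains f' where "(f has_derivative f') (at x within S)"
proof -
  obtain r L K where r: "r > 0"
    and L_add: "\<And>a b. a \<in> D \<Longrightarrow> b \<in> D \<Longrightarrow> L (a + b) = L a + L b"
    and L_scale: "\<And>c a. a \<in> D \<Longrightarrow> L (c *\<^sub>R a) = c *\<^sub>R L a"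
    and L_bound: "\<And>h. h \<in> D \<Longrightarrow> norm (L h) \<le> K * norm h"
    and remainder: "\<And>h. h \<in> D \<Longrightarrow> norm h < r \<Longrightarrow> norm (f (x + h) - f x - L h) \<le> K * (norm h)\<^sup>2"
    using analytic_in_first_order[OF an x subspace_0[OF D(1)]] by metis
  have "bounded_linear (\<lambda>y. L (P y))"
    by (rule bounded_linear_compose_projection[OF L_add L_scale L_bound P(1,2)])
  moreover have "((\<lambda>y. (f y - (f x + L (P (y - x)))) /\<^sub>R norm (y - x)) \<longlongrightarrow> 0) (at x within S)"
  proof (rule Lim_null_comparison)
    show "\<forall>\<^sub>F y in at x within S. norm ((f y - (f x + L (P (y - x)))) /\<^sub>R norm (y - x)) \<le> \<bar>K\<bar> * norm (y - x)"
      unfolding eventually_at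
    proof (intro exI[of _ r] conjI ballI impI)
      fix y assume y: "y \<in> S" "y \<noteq> x \<and> dist y x < r"
      have hD: "y - x \<in> D" using y(1) x D by (meson subsetD subspace_diff)
      have pos: "norm (y - x) > 0" using y(2) by simp
      have "norm ((f y - (f x + L (P (y - x)))) /\<^sub>R norm (y - x))
          = norm (f y - (f x + L (P (y - x)))) / norm (y - x)" by (simp add: divide_inverse_commute)
      also have "\<dots> \<le> K * (norm (y - x))\<^sup>2 / norm (y - x)"
        using remainder[OF hD] y(2) pos unfolding P(3)[OF hD]
        by (intro divide_right_mono) (simp_all add: dist_norm algebra_simps)
      also have "\<dots> \<le> \<bar>K\<bar> * norm (y - x)"
        using pos by (simp add: power2_eq_square mult_right_mono)
      finally show "norm ((f y - (f x + L (P (y - x)))) /\<^sub>R norm (y - x)) \<le> \<bar>K\<bar> * norm (y - x)" .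
    qed (fact r)
    show "((\<lambda>y. \<bar>K\<bar> * norm (y - x)) \<longlongrightarrow> 0) (at x within S)"
      by (intro tendsto_mult_right_zero tendsto_norm_zero LIM_zero tendsto_ident_at)
  qed
  ultimately have "(f has_derivative (\<lambda>y. L (P y))) (at x within S)"
    by (simp add: has_derivative_within divide_inverse_commute)
  then show thesis by (rule that)
qed

lemma analytic_in_isCont:
  fixes f :: "'a::real_normed_vector \<Rightarrow> 'b::banach"
  assumes "analytic_in UNIV U f" "open U" "x \<in> U"
  shows "isCont f x"
proof -
  obtain f' where "(f has_derivative f') (at x within U)"
    using analytic_in_has_derivative[OF assms(1,3) subspace_UNIV subset_UNIV bounded_linear_ident]
    by auto
  then show ?thesis
    using has_derivative_continuous at_within_open[OF assms(3,2)] by metis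
qed

section \<open>Dual norms\<close>

lemma dual_norm_on_ge:
  fixes l :: "'a::real_normed_vector \<Rightarrow> real"
  assumes l: "bounded_linear l" and y: "y \<in> closure S"
  shows "l y \<le> dual_norm_on (closure S) l * norm y"
proof (cases "y = 0")
  case True
  then show ?thesis using l by (simp add: linear_simps)
next
  case False
  obtain K where K: "\<And>x. norm (l x) \<le> norm x * K" using bounded_linear.bounded[OF l] by blast
  have "bdd_above ((\<lambda>x. l x / norm x) ` (closure S - {0}))"
  proof (rule bdd_aboveI2)
    fix x assume "x \<in> closure S - {0}"
    then show "l x / norm x \<le> K" using K[of x] by (simp add: divide_le_eq mult.commute)
  qed
  then have "l y / norm y \<le> (SUP x\<in>closure S - {0}. l x / norm x)"
    by (rule cSUP_upper[rotated]) (use y False in auto)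
  moreover have "dual_norm_on (closure S) l = (SUP x\<in>closure S - {0}. l x / norm x)"
    using y False by (auto simp: dual_norm_on_def)
  ultimately show ?thesis using False by (simp add: divide_le_eq)
qed

lemma dual_norm_on_le:
  fixes l :: "'a::real_normed_vector \<Rightarrow> real"
  assumes l: "bounded_linear l" and c: "0 \<le> c" and S: "\<And>y. y \<in> S \<Longrightarrow> l y \<le> c * norm y"
  shows "dual_norm_on (closure S) l \<le> c"
proof -
  have "closed {y. l y \<le> c * norm y}"
    by (intro closed_Collect_le continuous_intros linear_continuous_on l)
  then have closure_S: "closure S \<subseteq> {y. l y \<le> c * norm y}"
    using S by (intro closure_minimal) auto
  show ?thesis
  proof (cases "closure S \<subseteq> {0}")
    case False
    then have "(SUP y\<in>closure S - {0}. l y / norm y) \<le> c"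
      using closure_S by (intro cSUP_least) (auto simp: divide_le_eq)
    then show ?thesis using False by (simp add: dual_norm_on_def)
  qed (simp add: dual_norm_on_def c)
qed

lemma dual_norm_on_nonneg:
  fixes l :: "'a::real_normed_vector \<Rightarrow> real"
  assumes l: "bounded_linear l" and S: "subspace S"
  shows "0 \<le> dual_norm_on (closure S) l"
proof (cases "closure S \<subseteq> {0}")
  case False
  then obtain y where y: "y \<in> closure S" "y \<noteq> 0" by auto
  have "uminus ` S = S" using S by (force intro: image_eqI[of _ _ "- _"] simp: subspace_neg)
  then have "- y \<in> closure S"
    using closure_bounded_linear_image_subset[OF bounded_linear_minus[OF bounded_linear_ident], of S] y(1)
    by auto
  then have "- l y \<le> dual_norm_on (closure S) l * norm y"
    using dual_norm_on_ge[OF l] by (metis l bounded_linear.linear linear_neg norm_minus_cancel)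
  moreover have "l y \<le> dual_norm_on (closure S) l * norm y" by (rule dual_norm_on_ge[OF l y(1)])
  ultimately have "0 \<le> dual_norm_on (closure S) l * norm y" by linarith
  then show ?thesis using y(2) by (simp add: zero_le_mult_iff)
qed (simp add: dual_norm_on_def)

lemma dual_norm_on_le_transfer:
  fixes l :: "'a::real_normed_vector \<Rightarrow> real" and k :: "'b::real_normed_vector \<Rightarrow> real"
  assumes l: "bounded_linear l" and k: "bounded_linear k" and T: "subspace T" and c: "0 \<le> c"
    and match: "\<And>y. y \<in> S \<Longrightarrow> \<exists>z\<in>T. l y = k z \<and> norm z \<le> c * norm y"
  shows "dual_norm_on (closure S) l \<le> c * dual_norm_on (closure T) k"
proof (rule dual_norm_on_le[OF l])
  have b: "0 \<le> dual_norm_on (closure T) k" by (rule dual_norm_on_nonneg[OF k T])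
  then show "0 \<le> c * dual_norm_on (closure T) k" using c by simp
  fix y assume "y \<in> S"
  then obtain z where z: "z \<in> T" "l y = k z" "norm z \<le> c * norm y" using match by blast
  have "k z \<le> dual_norm_on (closure T) k * norm z"
    using z(1) closure_subset by (intro dual_norm_on_ge[OF k]) blast
  also have "\<dots> \<le> dual_norm_on (closure T) k * (c * norm y)" using z(3) b by (rule mult_left_mono)
  finally show "l y \<le> c * dual_norm_on (closure T) k * norm y" using z(2) by (simp add: ac_simps)
qed

section \<open>Linear algebra and continuity of constrained solutions\<close>

lemma bounded_linear_inv_into:
  fixes T :: "'a::real_normed_vector \<Rightarrow> 'b::euclidean_space"
  assumes T: "linear T" and V: "subspace V" and bij: "bij_betw T V UNIV"
  shows "bounded_linear (inv_into V T)"
proof -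
  have inj: "inj_on T V" and onto: "T ` V = UNIV" using bij by (auto simp: bij_betw_def)
  have SV: "inv_into V T y \<in> V" for y by (rule inv_into_into) (simp add: onto)
  have TS: "T (inv_into V T y) = y" for y by (rule f_inv_into_f) (simp add: onto)
  have "linear (inv_into V T)"
  proof
    fix a b
    have "inv_into V T a + inv_into V T b \<in> V" using SV V by (simp add: subspace_add)
    then show "inv_into V T (a + b) = inv_into V T a + inv_into V T b"
      using inv_into_f_f[OF inj] by (metis linear_add[OF T] TS)
  next
    fix c :: real and a
    have "c *\<^sub>R inv_into V T a \<in> V" using SV V by (simp add: subspace_scale)
    then show "inv_into V T (c *\<^sub>R a) = c *\<^sub>R inv_into V T a"
      using inv_into_f_f[OF inj] by (metis linear_scale[OF T] TS)
  qed
  then show ?thesis by (simp add: linear_conv_bounded_linear)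
qed

lemma linear_bij_betw_norm_le:
  fixes T :: "'a::real_normed_vector \<Rightarrow> 'b::euclidean_space"
  assumes "linear T" "subspace V" "bij_betw T V UNIV"
  obtains K where "\<And>v. v \<in> V \<Longrightarrow> norm v \<le> K * norm (T v)"
proof -
  obtain K where K: "\<And>y. norm (inv_into V T y) \<le> norm y * K"
    using bounded_linear.bounded[OF bounded_linear_inv_into[OF assms]] by blast
  have "norm v \<le> K * norm (T v)" if "v \<in> V" for v
    using K[of "T v"] inv_into_f_f[OF bij_betw_imp_inj_on[OF assms(3)] that] by (simp add: mult.commute)
  then show thesis by (rule that)
qed

text \<open>The difference d = w t - w t0 lies in V1 and satisfies A t0 (J d) = (A t0 - A t) (J (h + w t)),
  which the bound K0 turns into an estimate of d that vanishes with A t - A t0.\<close>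
lemma continuous_within_solution_in_complement:
  fixes J :: "'v::real_normed_vector \<Rightarrow> 'y::real_normed_vector"
    and A :: "'a::t2_space \<Rightarrow> ('y \<Rightarrow>\<^sub>L 'z::real_normed_vector)" and w :: "'a \<Rightarrow> 'v"
  assumes J: "bounded_linear J" and V1: "subspace V1"
    and w: "\<And>t. t \<in> I \<Longrightarrow> w t \<in> V1" "\<And>t. t \<in> I \<Longrightarrow> A t (J (h + w t)) = 0"
    and t0: "t0 \<in> I" and A: "continuous (at t0 within I) A"
    and K0: "\<And>v. v \<in> V1 \<Longrightarrow> norm v \<le> K0 * norm (A t0 (J v))"
  shows "continuous (at t0 within I) w"
proof -
  interpret J: bounded_linear J by (fact J)
  obtain KJ where KJ: "KJ > 0" "\<And>x. norm (J x) \<le> norm x * KJ" using J.pos_bounded by blast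
  define K where "K = \<bar>K0\<bar> * KJ"
  define e where "e t = norm (A t - A t0)" for t
  define c where "c = norm h + norm (w t0)"
  have e0: "(e \<longlongrightarrow> 0) (at t0 within I)"
    unfolding e_def using A by (intro tendsto_norm_zero LIM_zero) (simp add: continuous_within)
  then have small: "\<forall>\<^sub>F t in at t0 within I. K * e t < 1/2"
    by (intro order_tendstoD(2)[OF tendsto_mult_right_zero]) simp_all
  have bound: "norm (w t - w t0) \<le> 2 * K * c * e t" if t: "t \<in> I" "K * e t < 1/2" for t
  proof -
    define d where "d = w t - w t0"
    have "J d = J (h + w t) - J (h + w t0)" by (simp add: d_def J.diff[symmetric])
    then have "A t0 (J d) = (A t0 - A t) (J (h + w t))"
      using w(2)[OF t(1)] w(2)[OF t0] by (simp add: blinfun.diff_right blinfun.diff_left)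
    then have "norm (A t0 (J d)) \<le> norm (A t0 - A t) * norm (J (h + w t))"
      by (simp add: norm_blinfun)
    also have "norm (A t0 - A t) = e t" by (simp add: e_def norm_minus_commute)
    also have "norm (J (h + w t)) \<le> norm (h + w t) * KJ" by (rule KJ(2))
    also have "norm (h + w t) \<le> c + norm d"
      using norm_triangle_ineq[of "h + w t0" d] norm_triangle_ineq[of h "w t0"]
      by (simp add: c_def d_def)
    finally have Ad: "norm (A t0 (J d)) \<le> e t * ((c + norm d) * KJ)"
      using KJ(1) by (simp add: e_def mult_left_mono mult_right_mono)
    have "d \<in> V1" using w(1)[OF t(1)] w(1)[OF t0] V1 by (simp add: d_def subspace_diff)
    then have "norm d \<le> K0 * norm (A t0 (J d))" by (rule K0)
    also have "\<dots> \<le> \<bar>K0\<bar> * norm (A t0 (J d))" by (simp add: mult_right_mono)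
    also have "\<dots> \<le> \<bar>K0\<bar> * (e t * ((c + norm d) * KJ))" by (rule mult_left_mono[OF Ad]) simp
    also have "\<dots> = K * e t * c + K * e t * norm d" by (simp add: K_def algebra_simps)
    finally have "norm d \<le> K * e t * c + K * e t * norm d" .
    moreover have "K * e t * norm d \<le> 1/2 * norm d" using t(2) by (intro mult_right_mono) auto
    ultimately show ?thesis by (simp add: d_def algebra_simps)
  qed
  have "\<forall>\<^sub>F t in at t0 within I. t \<in> I" by (simp add: eventually_at_filter)
  with small have "\<forall>\<^sub>F t in at t0 within I. norm (w t - w t0) \<le> 2 * K * c * e t"
    by eventually_elim (use bound in auto)
  then have "((\<lambda>t. w t - w t0) \<longlongrightarrow> 0) (at t0 within I)"
    by (rule Lim_null_comparison) (intro tendsto_mult_right_zero e0)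
  then show ?thesis unfolding continuous_within by (simp add: LIM_zero_iff)
qed

section \<open>Lojasiewicz inequalities\<close>

definition lojasiewicz_ineq :: "'a::real_normed_vector set \<Rightarrow> 'a \<Rightarrow> ('a \<Rightarrow> real) \<Rightarrow> ('a \<Rightarrow> real) \<Rightarrow> bool" where
  "lojasiewicz_ineq S x f g \<longleftrightarrow> (\<exists>C>0. \<exists>\<sigma>>0. \<exists>\<theta>. 0 < \<theta> \<and> \<theta> \<le> 1/2 \<and>
     (\<forall>y\<in>S. norm (y - x) \<le> \<sigma> \<longrightarrow> \<bar>f y - f x\<bar> powr (1 - \<theta>) \<le> C * g y))"

lemma lojasiewicz_ineq_pullback:
  assumes L: "lojasiewicz_ineq S x f g" and c: "c > 0"
    and p: "continuous (at y within T) p" "p y = x" and y: "y \<in> T" and \<delta>: "\<delta> > 0"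
    and near: "\<And>z. z \<in> T \<Longrightarrow> norm (z - y) \<le> \<delta> \<Longrightarrow> p z \<in> S \<and> f (p z) = f' z \<and> g (p z) \<le> c * g' z"
  shows "lojasiewicz_ineq T y f' g'"
proof -
  obtain C \<sigma> \<theta> where C: "C > 0" and \<sigma>: "\<sigma> > 0" and \<theta>: "0 < \<theta>" "\<theta> \<le> 1/2"
    and ineq: "\<And>u. u \<in> S \<Longrightarrow> norm (u - x) \<le> \<sigma> \<Longrightarrow> \<bar>f u - f x\<bar> powr (1 - \<theta>) \<le> C * g u"
    using L unfolding lojasiewicz_ineq_def by metis
  obtain \<epsilon> where \<epsilon>: "\<epsilon> > 0" "\<And>z. z \<in> T \<Longrightarrow> dist z y < \<epsilon> \<Longrightarrow> dist (p z) x < \<sigma>"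
    using p \<sigma> unfolding continuous_within_eps_delta by metis
  have fy: "f x = f' y" using near[OF y] \<delta> p(2) by simp
  have "\<bar>f' z - f' y\<bar> powr (1 - \<theta>) \<le> (C * c) * g' z"
    if z: "z \<in> T" "norm (z - y) \<le> min \<delta> (\<epsilon> / 2)" for z
  proof -
    have pz: "p z \<in> S" "f (p z) = f' z" "g (p z) \<le> c * g' z" using near[OF z(1)] z(2) by auto
    have "norm (p z - x) \<le> \<sigma>" using \<epsilon>(2)[OF z(1)] z(2) \<epsilon>(1) by (simp add: dist_norm)
    then have "\<bar>f (p z) - f x\<bar> powr (1 - \<theta>) \<le> C * g (p z)" by (rule ineq[OF pz(1)])
    also have "\<dots> \<le> C * (c * g' z)" using pz(3) C by simp
    finally show ?thesis using pz(2) fy by simp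
  qed
  then have "C * c > 0 \<and> min \<delta> (\<epsilon> / 2) > 0 \<and> 0 < \<theta> \<and> \<theta> \<le> 1/2 \<and>
      (\<forall>z\<in>T. norm (z - y) \<le> min \<delta> (\<epsilon> / 2) \<longrightarrow> \<bar>f' z - f' y\<bar> powr (1 - \<theta>) \<le> (C * c) * g' z)"
    using C c \<delta> \<epsilon>(1) \<theta> by simp
  then show ?thesis unfolding lojasiewicz_ineq_def by blast
qed

section \<open>The chart of the constraint set\<close>

locale constraint_chart =
  fixes J :: "'v::banach \<Rightarrow> 'y::banach"
    and U M \<Omega> \<Omega>0 \<Omega>1 V0 V1 :: "'v set"
    and G :: "'v \<Rightarrow> 'z::euclidean_space" and dG :: "'v \<Rightarrow> ('y \<Rightarrow>\<^sub>L 'z)"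
    and ubar :: 'v and \<psi> :: "'v \<Rightarrow> 'v"
  assumes J: "bounded_linear J"
    and U: "open U"
    and M_def: "M = {u \<in> U. G u = 0}"
    and dG: "\<forall>u\<in>U. (G has_derivative (\<lambda>v. blinfun_apply (dG u) (J v))) (at u)"
    and dG_an: "analytic_in UNIV U dG"
    and V0_def: "V0 = {v. blinfun_apply (dG ubar) (J v) = 0}"
    and V1: "subspace V1"
    and \<Omega>0: "openin (top_of_set V0) \<Omega>0"
    and \<Omega>1: "openin (top_of_set V1) \<Omega>1"
    and \<Omega>_def: "\<Omega> = {a + b |a b. a \<in> \<Omega>0 \<and> b \<in> \<Omega>1}"
    and ubar_\<Omega>: "ubar \<in> \<Omega>" and \<Omega>_U: "\<Omega> \<subseteq> U"
    and \<psi>_an: "analytic_in V0 \<Omega>0 \<psi>"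
    and \<psi>_img: "\<psi> ` \<Omega>0 \<subseteq> \<Omega>1"
    and M_\<Omega>: "M \<inter> \<Omega> = {\<omega> + \<psi> \<omega> |\<omega>. \<omega> \<in> \<Omega>0}"
    and iso: "\<forall>u\<in>\<Omega>. bij_betw (\<lambda>v. blinfun_apply (dG u) (J v)) V1 UNIV"
begin

abbreviation G' :: "'v \<Rightarrow> 'v \<Rightarrow> 'z" where
  "G' u v \<equiv> blinfun_apply (dG u) (J v)"

lemma bounded_linear_G': "bounded_linear (G' u)"
  by (rule bounded_linear_compose[OF blinfun.bounded_linear_right J])

lemma linear_G': "linear (G' u)"
  using bounded_linear_G' by (rule bounded_linear.linear)

lemma subspace_V0: "subspace V0"
  unfolding V0_def by (rule linear_subspace_kernel[OF linear_G'])

lemma \<Omega>0_subset: "\<Omega>0 \<subseteq> V0"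
  using \<Omega>0 by (rule openin_imp_subset)

lemma \<psi>_in_V1: "\<omega> \<in> \<Omega>0 \<Longrightarrow> \<psi> \<omega> \<in> V1"
  using \<psi>_img openin_imp_subset[OF \<Omega>1] by blast

lemma isCont_dG: "u \<in> U \<Longrightarrow> isCont dG u"
  using analytic_in_isCont[OF dG_an U] .

lemma V1_norm_le:
  assumes "u \<in> \<Omega>"
  obtains K where "\<And>v. v \<in> V1 \<Longrightarrow> norm v \<le> K * norm (G' u v)"
  using linear_bij_betw_norm_le[OF linear_G' V1] iso assms by metis

text \<open>The projection onto V1 along V0 = ker G' ubar.\<close>
definition P1 :: "'v \<Rightarrow> 'v" where
  "P1 v = inv_into V1 (G' ubar) (G' ubar v)"

definition P0 :: "'v \<Rightarrow> 'v" where
  "P0 v = v - P1 v"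

lemma bounded_linear_P1: "bounded_linear P1"
  unfolding P1_def using iso ubar_\<Omega>
  by (intro bounded_linear_compose[OF bounded_linear_inv_into[OF linear_G' V1] bounded_linear_G']) blast

lemma bounded_linear_P0: "bounded_linear P0"
  unfolding P0_def by (intro bounded_linear_sub bounded_linear_ident bounded_linear_P1)

lemma P1_in_V1: "P1 v \<in> V1"
  unfolding P1_def using iso ubar_\<Omega> by (intro inv_into_into) (auto simp: bij_betw_def)

lemma G'_P1: "G' ubar (P1 v) = G' ubar v"
  unfolding P1_def using iso ubar_\<Omega> by (intro f_inv_into_f) (auto simp: bij_betw_def)

lemma P0_in_V0: "P0 v \<in> V0"
  using G'_P1 by (simp add: P0_def V0_def linear_diff[OF linear_G'])

lemma P1_add: "a \<in> V0 \<Longrightarrow> b \<in> V1 \<Longrightarrow> P1 (a + b) = b"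
  unfolding P1_def using iso ubar_\<Omega>
  by (intro inv_into_f_eq) (auto simp: V0_def bij_betw_def linear_add[OF linear_G'])

lemma P0_add: "a \<in> V0 \<Longrightarrow> b \<in> V1 \<Longrightarrow> P0 (a + b) = a"
  by (simp add: P0_def P1_add)

lemma P0_V0: "a \<in> V0 \<Longrightarrow> P0 a = a"
  using P0_add[of a 0] subspace_0[OF V1] by simp

lemma P0_V1: "b \<in> V1 \<Longrightarrow> P0 b = 0"
  using P0_add[of 0 b] subspace_0[OF subspace_V0] by simp

lemma open_\<Omega>: "open \<Omega>"
proof -
  obtain O0 O1 where "open O0" "\<Omega>0 = V0 \<inter> O0" "open O1" "\<Omega>1 = V1 \<inter> O1"
    using \<Omega>0 \<Omega>1 by (meson openin_open)
  moreover have "\<Omega> = P0 -` \<Omega>0 \<inter> P1 -` \<Omega>1"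
  proof (intro set_eqI iffI)
    fix v assume "v \<in> \<Omega>"
    then show "v \<in> P0 -` \<Omega>0 \<inter> P1 -` \<Omega>1"
      unfolding \<Omega>_def using \<Omega>0_subset openin_imp_subset[OF \<Omega>1] P0_add P1_add by blast
  next
    fix v assume "v \<in> P0 -` \<Omega>0 \<inter> P1 -` \<Omega>1"
    then show "v \<in> \<Omega>" unfolding \<Omega>_def P0_def by force
  qed
  ultimately have "\<Omega> = P0 -` O0 \<inter> P1 -` O1" using P0_in_V0 P1_in_V1 by auto
  then show ?thesis using \<open>open O0\<close> \<open>open O1\<close>
    by (metis bounded_linear_P0 bounded_linear_P1 continuous_open_vimage linear_continuous_at open_Int)
qed

lemma chart_in_M: "\<omega> \<in> \<Omega>0 \<Longrightarrow> \<omega> + \<psi> \<omega> \<in> M \<inter> \<Omega>"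
  unfolding M_\<Omega> by blast

lemma chart_in_U: "\<omega> \<in> \<Omega>0 \<Longrightarrow> \<omega> + \<psi> \<omega> \<in> U"
  using chart_in_M \<Omega>_U by blast

lemma P0_chart: "\<omega> \<in> \<Omega>0 \<Longrightarrow> P0 (\<omega> + \<psi> \<omega>) = \<omega>"
  using P0_add \<Omega>0_subset \<psi>_in_V1 by blast

lemma chart_P0:
  assumes "u \<in> M \<inter> \<Omega>"
  shows "P0 u \<in> \<Omega>0" and "P0 u + \<psi> (P0 u) = u"
  using assms P0_chart unfolding M_\<Omega> by auto

text \<open>A derivative within \<Omega>0 \<subseteq> V0 is determined only on V0, so only the values of D\<psi> \<omega>
  on V0 carry meaning.\<close>
definition D\<psi> :: "'v \<Rightarrow> 'v \<Rightarrow> 'v" where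
  "D\<psi> \<omega> = (SOME D. (\<psi> has_derivative D) (at \<omega> within \<Omega>0))"

lemma \<psi>_has_derivative:
  assumes "\<omega> \<in> \<Omega>0"
  shows "(\<psi> has_derivative D\<psi> \<omega>) (at \<omega> within \<Omega>0)"
proof -
  obtain D where "(\<psi> has_derivative D) (at \<omega> within \<Omega>0)"
    using analytic_in_has_derivative[OF \<psi>_an assms subspace_V0 \<Omega>0_subset bounded_linear_P0 P0_in_V0 P0_V0] .
  then show ?thesis unfolding D\<psi>_def by (rule someI[where P = "\<lambda>D. (\<psi> has_derivative D) (at \<omega> within \<Omega>0)"])
qed

lemma bounded_linear_D\<psi>: "\<omega> \<in> \<Omega>0 \<Longrightarrow> bounded_linear (D\<psi> \<omega>)"
  using \<psi>_has_derivative by (rule has_derivative_bounded_linear)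

lemma chart_has_derivative:
  "\<omega> \<in> \<Omega>0 \<Longrightarrow> ((\<lambda>x. x + \<psi> x) has_derivative (\<lambda>h. h + D\<psi> \<omega> h)) (at \<omega> within \<Omega>0)"
  by (intro has_derivative_add has_derivative_ident \<psi>_has_derivative)

lemma D\<psi>_in_V1:
  assumes \<omega>: "\<omega> \<in> \<Omega>0" and h: "h \<in> V0"
  shows "D\<psi> \<omega> h \<in> V1"
proof -
  have "((\<lambda>x. P0 (\<psi> x)) has_derivative (\<lambda>h. P0 (D\<psi> \<omega> h))) (at \<omega> within \<Omega>0)"
    by (rule bounded_linear.has_derivative[OF bounded_linear_P0 \<psi>_has_derivative[OF \<omega>]])
  moreover have "((\<lambda>x. P0 (\<psi> x)) has_derivative (\<lambda>h. 0)) (at \<omega> within \<Omega>0)"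
    by (rule has_derivative_transform_within[OF has_derivative_const zero_less_one \<omega>])
      (simp add: P0_V1 \<psi>_in_V1)
  ultimately have "P0 (D\<psi> \<omega> h) = 0"
    by (rule has_derivative_within_openin_unique[OF _ _ \<Omega>0 subspace_V0 \<omega> h])
  then show ?thesis using P1_in_V1[of "D\<psi> \<omega> h"] by (simp add: P0_def)
qed

lemma chart_derivative_comp:
  assumes \<omega>: "\<omega> \<in> \<Omega>0" and h: "h \<in> V0"
    and E: "(E has_derivative E') (at (\<omega> + \<psi> \<omega>))"
    and F: "((\<lambda>x. E (x + \<psi> x)) has_derivative F') (at \<omega> within \<Omega>0)"
  shows "F' h = E' (h + D\<psi> \<omega> h)"
  using has_derivative_within_openin_unique[OF F has_derivative_compose[OF chart_has_derivative[OF \<omega>] E]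
      \<Omega>0 subspace_V0 \<omega> h] .

lemma G'_chart_tangent:
  assumes \<omega>: "\<omega> \<in> \<Omega>0" and h: "h \<in> V0"
  shows "G' (\<omega> + \<psi> \<omega>) (h + D\<psi> \<omega> h) = 0"
proof -
  have "((\<lambda>x. G (x + \<psi> x)) has_derivative (\<lambda>h. 0)) (at \<omega> within \<Omega>0)"
    using chart_in_M M_def
    by (intro has_derivative_transform_within[OF has_derivative_const zero_less_one \<omega>]) auto
  then show ?thesis
    using chart_derivative_comp[OF \<omega> h] dG chart_in_U[OF \<omega>] by metis
qed

text \<open>The V1-component v = D\<psi> \<omega> h of a tangent vector h + v is controlled through
  G' ubar v = G' ubar (h + v) = (dG ubar - dG (\<omega> + \<psi> \<omega>)) (J (h + v)).\<close>
lemma J_D\<psi>_le: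
  obtains K where "0 \<le> K"
    and "\<And>\<omega> h. \<omega> \<in> \<Omega>0 \<Longrightarrow> h \<in> V0 \<Longrightarrow>
      norm (J (D\<psi> \<omega> h)) \<le> K * norm (dG ubar) * norm (J (h + D\<psi> \<omega> h))"
    and "\<And>\<omega> h. \<omega> \<in> \<Omega>0 \<Longrightarrow> h \<in> V0 \<Longrightarrow>
      norm (J (D\<psi> \<omega> h)) \<le> K * norm (dG ubar - dG (\<omega> + \<psi> \<omega>)) * norm (J (h + D\<psi> \<omega> h))"
proof -
  obtain K0 where K0: "\<And>v. v \<in> V1 \<Longrightarrow> norm v \<le> K0 * norm (G' ubar v)"
    using V1_norm_le[OF ubar_\<Omega>] by blast
  obtain KJ where KJ: "KJ > 0" "\<And>x. norm (J x) \<le> norm x * KJ"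
    using bounded_linear.pos_bounded[OF J] by blast
  define K where "K = KJ * \<bar>K0\<bar>"
  have K: "0 \<le> K" using KJ(1) by (simp add: K_def)
  have JV1: "norm (J v) \<le> K * norm (G' ubar v)" if "v \<in> V1" for v
  proof -
    have "norm v \<le> \<bar>K0\<bar> * norm (G' ubar v)"
      using K0[OF that] abs_ge_self[of K0] by (meson mult_right_mono norm_ge_zero order_trans)
    then have "norm v * KJ \<le> \<bar>K0\<bar> * norm (G' ubar v) * KJ" using KJ(1) by (simp add: mult_right_mono)
    then show ?thesis using KJ(2)[of v] by (simp add: K_def ac_simps)
  qed
  have G'_eq: "G' ubar (D\<psi> \<omega> h) = G' ubar (h + D\<psi> \<omega> h)"
    "G' ubar (D\<psi> \<omega> h) = blinfun_apply (dG ubar - dG (\<omega> + \<psi> \<omega>)) (J (h + D\<psi> \<omega> h))"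
    if "\<omega> \<in> \<Omega>0" "h \<in> V0" for \<omega> h
    using that G'_chart_tangent[OF that] by (simp_all add: V0_def linear_add[OF linear_G'] blinfun.diff_left)
  show thesis
  proof (rule that[of K])
    show "0 \<le> K" by (fact K)
  next
    fix \<omega> h assume \<omega>h: "\<omega> \<in> \<Omega>0" "h \<in> V0"
    have "norm (J (D\<psi> \<omega> h)) \<le> K * norm (G' ubar (D\<psi> \<omega> h))" by (rule JV1[OF D\<psi>_in_V1[OF \<omega>h]])
    also have "\<dots> \<le> K * (norm (dG ubar) * norm (J (h + D\<psi> \<omega> h)))"
      unfolding G'_eq(1)[OF \<omega>h] by (rule mult_left_mono[OF norm_blinfun K])
    finally show "norm (J (D\<psi> \<omega> h)) \<le> K * norm (dG ubar) * norm (J (h + D\<psi> \<omega> h))"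
      by (simp add: mult.assoc)
    have "norm (J (D\<psi> \<omega> h)) \<le> K * norm (G' ubar (D\<psi> \<omega> h))" by (rule JV1[OF D\<psi>_in_V1[OF \<omega>h]])
    also have "\<dots> \<le> K * (norm (dG ubar - dG (\<omega> + \<psi> \<omega>)) * norm (J (h + D\<psi> \<omega> h)))"
      unfolding G'_eq(2)[OF \<omega>h] by (rule mult_left_mono[OF norm_blinfun K])
    finally show "norm (J (D\<psi> \<omega> h)) \<le> K * norm (dG ubar - dG (\<omega> + \<psi> \<omega>)) * norm (J (h + D\<psi> \<omega> h))"
      by (simp add: mult.assoc)
  qed
qed

lemma chart_tangent_lower:
  obtains c where "c > 0" and "\<And>\<omega> h. \<omega> \<in> \<Omega>0 \<Longrightarrow> h \<in> V0 \<Longrightarrow> norm (J h) \<le> c * norm (J (h + D\<psi> \<omega> h))"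
proof -
  obtain K where K: "0 \<le> K"
    "\<And>\<omega> h. \<omega> \<in> \<Omega>0 \<Longrightarrow> h \<in> V0 \<Longrightarrow> norm (J (D\<psi> \<omega> h)) \<le> K * norm (dG ubar) * norm (J (h + D\<psi> \<omega> h))"
    using J_D\<psi>_le by metis
  have "norm (J h) \<le> (1 + K * norm (dG ubar)) * norm (J (h + D\<psi> \<omega> h))"
    if "\<omega> \<in> \<Omega>0" "h \<in> V0" for \<omega> h
    using K(2)[OF that] norm_triangle_ineq4[of "J (h + D\<psi> \<omega> h)" "J (D\<psi> \<omega> h)"]
    by (simp add: linear_add[OF bounded_linear.linear[OF J]] algebra_simps)
  moreover have "1 + K * norm (dG ubar) > 0" using K(1) by (simp add: add_pos_nonneg)
  ultimately show thesis using that by blast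
qed

lemma chart_near_ubar:
  obtains \<delta> where "\<delta> > 0" and "\<And>u. u \<in> M \<Longrightarrow> norm (u - ubar) \<le> \<delta> \<Longrightarrow>
    u \<in> \<Omega> \<and> (\<forall>h\<in>V0. norm (J (h + D\<psi> (P0 u) h)) \<le> 2 * norm (J h))"
proof -
  obtain K where K: "0 \<le> K" "\<And>\<omega> h. \<omega> \<in> \<Omega>0 \<Longrightarrow> h \<in> V0 \<Longrightarrow>
      norm (J (D\<psi> \<omega> h)) \<le> K * norm (dG ubar - dG (\<omega> + \<psi> \<omega>)) * norm (J (h + D\<psi> \<omega> h))"
    using J_D\<psi>_le by metis
  have "1 / (2 * K + 1) > 0" using K(1) by simp
  then obtain \<delta>1 where \<delta>1: "\<delta>1 > 0" "\<And>u. dist u ubar < \<delta>1 \<Longrightarrow> dist (dG u) (dG ubar) < 1 / (2 * K + 1)"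
    using isCont_dG[OF subsetD[OF \<Omega>_U ubar_\<Omega>]] unfolding continuous_at_eps_delta by blast
  obtain \<delta>2 where \<delta>2: "\<delta>2 > 0" "ball ubar \<delta>2 \<subseteq> \<Omega>"
    using open_\<Omega> ubar_\<Omega> open_contains_ball by blast
  show thesis
  proof (rule that[of "min \<delta>1 \<delta>2 / 2"])
    show "min \<delta>1 \<delta>2 / 2 > 0" using \<delta>1(1) \<delta>2(1) by simp
    fix u assume u: "u \<in> M" "norm (u - ubar) \<le> min \<delta>1 \<delta>2 / 2"
    then have "u \<in> \<Omega>" using \<delta>1(1) \<delta>2 by (auto simp: dist_norm norm_minus_commute)
    then have \<omega>: "P0 u \<in> \<Omega>0" and u_eq: "P0 u + \<psi> (P0 u) = u" using chart_P0 u(1) by auto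
    have small: "K * norm (dG ubar - dG u) \<le> 1/2"
    proof -
      have "norm (dG ubar - dG u) \<le> 1 / (2 * K + 1)"
        using \<delta>1(2)[of u] u(2) \<delta>1(1) by (simp add: dist_norm norm_minus_commute)
      then have "K * norm (dG ubar - dG u) \<le> K * (1 / (2 * K + 1))"
        using K(1) by (rule mult_left_mono)
      also have "\<dots> \<le> 1/2" using K(1) by (simp add: field_simps)
      finally show ?thesis .
    qed
    have "norm (J (h + D\<psi> (P0 u) h)) \<le> 2 * norm (J h)" if h: "h \<in> V0" for h
    proof -
      let ?v = "D\<psi> (P0 u) h"
      have tri: "norm (J (h + ?v)) \<le> norm (J h) + norm (J ?v)"
        by (simp add: linear_add[OF bounded_linear.linear[OF J]] norm_triangle_ineq)
      have "norm (J ?v) \<le> K * norm (dG ubar - dG u) * norm (J (h + ?v))"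
        using K(2)[OF \<omega> h] u_eq by simp
      also have "\<dots> \<le> 1/2 * (norm (J h) + norm (J ?v))"
        using small tri by (intro mult_mono) auto
      finally show ?thesis using tri by simp
    qed
    with \<open>u \<in> \<Omega>\<close> show "u \<in> \<Omega> \<and> (\<forall>h\<in>V0. norm (J (h + D\<psi> (P0 u) h)) \<le> 2 * norm (J h))" by blast
  qed
qed

lemma chart_line_has_vector_derivative:
  assumes I: "open I" "t \<in> I" and line: "\<And>s. s \<in> I \<Longrightarrow> \<omega> + s *\<^sub>R h \<in> \<Omega>0"
  shows "((\<lambda>s. \<omega> + s *\<^sub>R h + \<psi> (\<omega> + s *\<^sub>R h)) has_vector_derivative h + D\<psi> (\<omega> + t *\<^sub>R h) h) (at t)"
proof -
  define p where "p = (\<lambda>s. \<omega> + s *\<^sub>R h)"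
  have "(p has_derivative (\<lambda>s. s *\<^sub>R h)) (at t within I)"
    unfolding p_def by (intro derivative_eq_intros) auto
  moreover have "(\<psi> has_derivative D\<psi> (p t)) (at (p t) within p ` I)"
    using line by (intro has_derivative_subset[OF \<psi>_has_derivative]) (auto simp: p_def I(2))
  ultimately have "((\<lambda>s. p s + \<psi> (p s)) has_derivative (\<lambda>s. s *\<^sub>R h + D\<psi> (p t) (s *\<^sub>R h))) (at t within I)"
    using diff_chain_within by (intro has_derivative_add) (auto simp: comp_def)
  moreover have "(\<lambda>s. s *\<^sub>R h + D\<psi> (p t) (s *\<^sub>R h)) = (\<lambda>s. s *\<^sub>R (h + D\<psi> (p t) h))"
    using linear_scale[OF bounded_linear.linear[OF bounded_linear_D\<psi>[OF line[OF I(2)]]]]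
    by (simp add: fun_eq_iff scaleR_add_right p_def)
  ultimately show ?thesis
    unfolding has_vector_derivative_def at_within_open[OF I(2,1)] by (simp add: p_def)
qed

lemma continuous_on_chart_line_derivative:
  assumes h: "h \<in> V0" and line: "\<And>s. s \<in> I \<Longrightarrow> \<omega> + s *\<^sub>R h \<in> \<Omega>0"
  shows "continuous_on I (\<lambda>s. h + D\<psi> (\<omega> + s *\<^sub>R h) h)"
  unfolding continuous_on_eq_continuous_within
proof
  fix t assume t: "t \<in> I"
  define p where "p = (\<lambda>s. \<omega> + s *\<^sub>R h)"
  have p: "continuous (at t within I) p" unfolding p_def by (intro continuous_intros)
  have "continuous (at (p t) within p ` I) \<psi>"
    unfolding p_def using has_derivative_continuous[OF \<psi>_has_derivative[OF line[OF t]]]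
    by (rule continuous_within_subset) (auto intro: line)
  then have "continuous (at t within I) (\<lambda>s. p s + \<psi> (p s))"
    by (rule continuous_add[OF p continuous_within_compose2[OF p]])
  moreover have "isCont dG (p t + \<psi> (p t))"
    unfolding p_def by (rule isCont_dG[OF chart_in_U[OF line[OF t]]])
  ultimately have dG_cont: "continuous (at t within I) (\<lambda>s. dG (p s + \<psi> (p s)))"
    by (rule continuous_within_compose3[rotated])
  obtain K where K: "\<And>v. v \<in> V1 \<Longrightarrow> norm v \<le> K * norm (G' (p t + \<psi> (p t)) v)"
    using V1_norm_le chart_in_M[OF line[OF t]] by (auto simp: p_def)
  have "continuous (at t within I) (\<lambda>s. D\<psi> (p s) h)"
    by (rule continuous_within_solution_in_complement[OF J V1 _ _ t dG_cont K])
      (use D\<psi>_in_V1[OF line h] G'_chart_tangent[OF line h] in \<open>auto simp: p_def\<close>)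
  then show "continuous (at t within I) (\<lambda>s. h + D\<psi> (\<omega> + s *\<^sub>R h) h)"
    by (intro continuous_add continuous_const) (simp add: p_def)
qed

lemma chart_tangent_in_tangent_space:
  assumes \<omega>: "\<omega> \<in> \<Omega>0" and h: "h \<in> V0"
  shows "h + D\<psi> \<omega> h \<in> tangent_space M \<Omega> (\<omega> + \<psi> \<omega>)"
proof -
  obtain e where e: "e > 0" "\<And>t. \<bar>t\<bar> < e \<Longrightarrow> \<omega> + t *\<^sub>R h \<in> \<Omega>0"
    using openin_subspace_line[OF \<Omega>0 subspace_V0 \<omega> h] by blast
  have line: "\<omega> + t *\<^sub>R h \<in> \<Omega>0" if "t \<in> {-e<..<e}" for t using e(2) that by auto
  define \<gamma> where "\<gamma> = (\<lambda>s. \<omega> + s *\<^sub>R h + \<psi> (\<omega> + s *\<^sub>R h))"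
  define \<gamma>' where "\<gamma>' = (\<lambda>s. h + D\<psi> (\<omega> + s *\<^sub>R h) h)"
  have "\<forall>t\<in>{-e<..<e}. (\<gamma> has_vector_derivative \<gamma>' t) (at t) \<and> \<gamma> t \<in> M \<inter> \<Omega>"
    unfolding \<gamma>_def \<gamma>'_def
    using chart_line_has_vector_derivative[OF open_greaterThanLessThan _ line] chart_in_M[OF line]
    by blast
  moreover have "continuous_on {-e<..<e} \<gamma>'"
    unfolding \<gamma>'_def by (rule continuous_on_chart_line_derivative[OF h line])
  moreover have "\<gamma> 0 = \<omega> + \<psi> \<omega>" "h + D\<psi> \<omega> h = \<gamma>' 0" by (simp_all add: \<gamma>_def \<gamma>'_def)
  ultimately show ?thesis unfolding tangent_space_def using e(1) by blast
qed

text \<open>A curve in M \<inter> \<Omega> is the chart applied to its P0-projection; differentiating that identity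
  at 0 shows that its velocity has the form h + D\<psi> \<omega> h.\<close>
lemma tangent_space_chart_subset:
  assumes \<omega>: "\<omega> \<in> \<Omega>0"
  shows "tangent_space M \<Omega> (\<omega> + \<psi> \<omega>) \<subseteq> (\<lambda>h. h + D\<psi> \<omega> h) ` V0"
proof
  fix v assume "v \<in> tangent_space M \<Omega> (\<omega> + \<psi> \<omega>)"
  then obtain \<epsilon> \<gamma> \<gamma>' where \<epsilon>: "\<epsilon> > 0"
    and \<gamma>: "\<forall>t\<in>{-\<epsilon><..<\<epsilon>}. (\<gamma> has_vector_derivative \<gamma>' t) (at t) \<and> \<gamma> t \<in> M \<inter> \<Omega>"
    and \<gamma>0: "\<gamma> 0 = \<omega> + \<psi> \<omega>" and v: "v = \<gamma>' 0"
    unfolding tangent_space_def by blast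
  define I where "I = {-\<epsilon><..<\<epsilon>}"
  define q where "q = (\<lambda>s. P0 (\<gamma> s))"
  have I0: "0 \<in> I" using \<epsilon> by (simp add: I_def)
  have at0: "at 0 within I = at 0" by (rule at_within_open[OF I0]) (simp add: I_def)
  have d\<gamma>: "(\<gamma> has_derivative (\<lambda>s. s *\<^sub>R v)) (at 0)"
    using \<gamma> I0 v unfolding I_def has_vector_derivative_def by blast
  have dq: "(q has_derivative (\<lambda>s. P0 (s *\<^sub>R v))) (at 0 within I)"
    unfolding q_def at0 by (rule bounded_linear.has_derivative[OF bounded_linear_P0 d\<gamma>])
  have q0: "q 0 = \<omega>" using P0_chart[OF \<omega>] \<gamma>0 by (simp add: q_def)
  have qI: "q ` I \<subseteq> \<Omega>0" using \<gamma> chart_P0(1) by (auto simp: q_def I_def)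
  have "(\<psi> has_derivative D\<psi> \<omega>) (at (q 0) within q ` I)"
    unfolding q0 by (rule has_derivative_subset[OF \<psi>_has_derivative[OF \<omega>] qI])
  then have "((\<lambda>s. q s + \<psi> (q s)) has_derivative (\<lambda>s. P0 (s *\<^sub>R v) + D\<psi> \<omega> (P0 (s *\<^sub>R v)))) (at 0 within I)"
    using diff_chain_within[OF dq] by (intro has_derivative_add[OF dq]) (simp add: comp_def)
  then have "(\<gamma> has_derivative (\<lambda>s. P0 (s *\<^sub>R v) + D\<psi> \<omega> (P0 (s *\<^sub>R v)))) (at 0)"
    unfolding at0[symmetric]
    by (rule has_derivative_transform_within[OF _ zero_less_one I0])
      (use \<gamma> chart_P0(2) in \<open>auto simp: q_def I_def\<close>)
  then have "(\<lambda>s. s *\<^sub>R v) = (\<lambda>s. P0 (s *\<^sub>R v) + D\<psi> \<omega> (P0 (s *\<^sub>R v)))"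
    by (rule has_derivative_unique[OF d\<gamma>])
  from fun_cong[OF this, of 1] have "v = P0 v + D\<psi> \<omega> (P0 v)" by simp
  then show "v \<in> (\<lambda>h. h + D\<psi> \<omega> h) ` V0" using P0_in_V0 by blast
qed

lemma tangent_space_chart:
  "\<omega> \<in> \<Omega>0 \<Longrightarrow> tangent_space M \<Omega> (\<omega> + \<psi> \<omega>) = (\<lambda>h. h + D\<psi> \<omega> h) ` V0"
  using tangent_space_chart_subset chart_tangent_in_tangent_space by blast

lemma subspace_J_tangent_space:
  assumes "\<omega> \<in> \<Omega>0"
  shows "subspace (J ` tangent_space M \<Omega> (\<omega> + \<psi> \<omega>))"
proof -
  have "linear (\<lambda>h. J (h + D\<psi> \<omega> h))"
    using bounded_linear_compose[OF J bounded_linear_add[OF bounded_linear_ident bounded_linear_D\<psi>[OF assms]]]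
    by (rule bounded_linear.linear)
  then show ?thesis
    unfolding tangent_space_chart[OF assms] image_comp comp_def by (rule linear_subspace_image[OF _ subspace_V0])
qed

end

locale constrained_energy = constraint_chart J U M \<Omega> \<Omega>0 \<Omega>1 V0 V1 G dG ubar \<psi>
  for J :: "'v::banach \<Rightarrow> 'y::banach" and U M \<Omega> \<Omega>0 \<Omega>1 V0 V1 G dG ubar \<psi> +
  fixes E :: "'v \<Rightarrow> real" and dE dF :: "'v \<Rightarrow> ('y \<Rightarrow>\<^sub>L real)"
  assumes dE: "\<forall>u\<in>U. (E has_derivative (\<lambda>v. blinfun_apply (dE u) (J v))) (at u)"
    and dF: "\<forall>\<omega>\<in>\<Omega>0. ((\<lambda>\<omega>. E (\<omega> + \<psi> \<omega>)) has_derivative (\<lambda>h. blinfun_apply (dF \<omega>) (J h))) (at \<omega> within \<Omega>0)"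
begin

definition tangent_dual_norm :: "'v \<Rightarrow> real" where
  "tangent_dual_norm u = dual_norm_on (closure (J ` tangent_space M \<Omega> u)) (blinfun_apply (dE u))"

definition V0_dual_norm :: "'v \<Rightarrow> real" where
  "V0_dual_norm \<omega> = dual_norm_on (closure (J ` V0)) (blinfun_apply (dF \<omega>))"

lemma dF_eq_dE_chart:
  assumes "\<omega> \<in> \<Omega>0" "h \<in> V0"
  shows "dF \<omega> (J h) = dE (\<omega> + \<psi> \<omega>) (J (h + D\<psi> \<omega> h))"
  using dE chart_in_U[OF assms(1)] dF assms(1) by (intro chart_derivative_comp[OF assms]) auto

lemma tangent_dual_norm_le:
  obtains c where "c > 0" and "\<And>\<omega>. \<omega> \<in> \<Omega>0 \<Longrightarrow> tangent_dual_norm (\<omega> + \<psi> \<omega>) \<le> c * V0_dual_norm \<omega>"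
proof -
  obtain c where c: "c > 0" "\<And>\<omega> h. \<omega> \<in> \<Omega>0 \<Longrightarrow> h \<in> V0 \<Longrightarrow> norm (J h) \<le> c * norm (J (h + D\<psi> \<omega> h))"
    using chart_tangent_lower by blast
  have "tangent_dual_norm (\<omega> + \<psi> \<omega>) \<le> c * V0_dual_norm \<omega>" if \<omega>: "\<omega> \<in> \<Omega>0" for \<omega>
    unfolding tangent_dual_norm_def V0_dual_norm_def
  proof (rule dual_norm_on_le_transfer[OF blinfun.bounded_linear_right blinfun.bounded_linear_right])
    show "subspace (J ` V0)" by (rule linear_subspace_image[OF bounded_linear.linear[OF J] subspace_V0])
    fix y assume "y \<in> J ` tangent_space M \<Omega> (\<omega> + \<psi> \<omega>)"
    then obtain h where "h \<in> V0" "y = J (h + D\<psi> \<omega> h)" using tangent_space_chart[OF \<omega>] by auto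
    then show "\<exists>z\<in>J ` V0. dE (\<omega> + \<psi> \<omega>) y = dF \<omega> z \<and> norm z \<le> c * norm y"
      using dF_eq_dE_chart[OF \<omega>] c(2)[OF \<omega>] by auto
  qed (use c in simp)
  with c(1) show thesis by (rule that)
qed

lemma V0_dual_norm_le_near:
  obtains \<delta> where "\<delta> > 0"
    and "\<And>u. u \<in> M \<Longrightarrow> norm (u - ubar) \<le> \<delta> \<Longrightarrow> u \<in> \<Omega> \<and> V0_dual_norm (P0 u) \<le> 2 * tangent_dual_norm u"
proof -
  obtain \<delta> where \<delta>: "\<delta> > 0" "\<And>u. u \<in> M \<Longrightarrow> norm (u - ubar) \<le> \<delta> \<Longrightarrow>
      u \<in> \<Omega> \<and> (\<forall>h\<in>V0. norm (J (h + D\<psi> (P0 u) h)) \<le> 2 * norm (J h))"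
    using chart_near_ubar by blast
  have "V0_dual_norm (P0 u) \<le> 2 * tangent_dual_norm u" if u: "u \<in> M" "norm (u - ubar) \<le> \<delta>" for u
  proof -
    have "u \<in> M \<inter> \<Omega>" using \<delta>(2)[OF u] u(1) by blast
    then have \<omega>: "P0 u \<in> \<Omega>0" and u_eq: "P0 u + \<psi> (P0 u) = u" by (rule chart_P0)+
    have "V0_dual_norm (P0 u) \<le> 2 * tangent_dual_norm (P0 u + \<psi> (P0 u))"
      unfolding tangent_dual_norm_def V0_dual_norm_def
    proof (rule dual_norm_on_le_transfer[OF blinfun.bounded_linear_right blinfun.bounded_linear_right
          subspace_J_tangent_space[OF \<omega>]])
      fix y assume "y \<in> J ` V0"
      then obtain h where h: "h \<in> V0" "y = J h" by blast
      then show "\<exists>z\<in>J ` tangent_space M \<Omega> (P0 u + \<psi> (P0 u)).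
          dF (P0 u) y = dE (P0 u + \<psi> (P0 u)) z \<and> norm z \<le> 2 * norm y"
        using dF_eq_dE_chart[OF \<omega> h(1)] chart_tangent_in_tangent_space[OF \<omega> h(1)] \<delta>(2)[OF u] by auto
    qed simp
    then show ?thesis using u_eq by simp
  qed
  with \<delta> show thesis using that by blast
qed

end

theorem lemma4p2:
  fixes J :: "'v::banach \<Rightarrow> 'y::banach"
    and U :: "'v set"
    and E :: "'v \<Rightarrow> real" and G :: "'v \<Rightarrow> real ^ 'm"
    and dE :: "'v \<Rightarrow> ('y \<Rightarrow>\<^sub>L real)" and dG :: "'v \<Rightarrow> ('y \<Rightarrow>\<^sub>L (real ^ 'm))"
    and ubar :: 'v and V0 V1 \<Omega>0 \<Omega>1 \<Omega> M :: "'v set" and \<psi> :: "'v \<Rightarrow> 'v"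
    and \<omega>bar :: 'v and dF :: "'v \<Rightarrow> ('y \<Rightarrow>\<^sub>L real)"
  assumes J: "bounded_linear J" "inj J" "closure (range J) = UNIV"
    and U: "open U"
    and E_an: "analytic_in UNIV U E" and G_an: "analytic_in UNIV U G"
    and M_def: "M = {u \<in> U. G u = 0}"
    and ubar: "ubar \<in> U"
    and dE: "\<forall>u\<in>U. (E has_derivative (\<lambda>v. blinfun_apply (dE u) (J v))) (at u)"
    and dE_an: "analytic_in UNIV U dE"
    and dG: "\<forall>u\<in>U. (G has_derivative (\<lambda>v. blinfun_apply (dG u) (J v))) (at u)"
    and dG_an: "analytic_in UNIV U dG"
    and G_ubar: "G ubar = 0"
    and surj: "surj (\<lambda>v. blinfun_apply (dG ubar) (J v))"
    and V0_def: "V0 = {v. blinfun_apply (dG ubar) (J v) = 0}"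
    and V1: "subspace V1" "closed V1" "V0 \<inter> V1 = {0}" "{a + b |a b. a \<in> V0 \<and> b \<in> V1} = UNIV"
    and \<Omega>0: "\<Omega>0 \<subseteq> V0" "openin (top_of_set V0) \<Omega>0"
    and \<Omega>1: "\<Omega>1 \<subseteq> V1" "openin (top_of_set V1) \<Omega>1"
    and \<Omega>_def: "\<Omega> = {a + b |a b. a \<in> \<Omega>0 \<and> b \<in> \<Omega>1}"
    and \<Omega>U: "ubar \<in> \<Omega>" "\<Omega> \<subseteq> U"
    and \<psi>_an: "analytic_in V0 \<Omega>0 \<psi>"
    and \<psi>_img: "\<psi> ` \<Omega>0 \<subseteq> \<Omega>1"
    and M\<Omega>: "M \<inter> \<Omega> = {\<omega> + \<psi> \<omega> |\<omega>. \<omega> \<in> \<Omega>0}"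
    and iso: "\<forall>u\<in>\<Omega>. bij_betw (\<lambda>v. blinfun_apply (dG u) (J v)) V1 UNIV"
    and \<omega>bar: "\<omega>bar \<in> \<Omega>0" "\<omega>bar + \<psi> \<omega>bar = ubar"
    and dF: "\<forall>\<omega>\<in>\<Omega>0. ((\<lambda>\<omega>. E (\<omega> + \<psi> \<omega>)) has_derivative
                         (\<lambda>h. blinfun_apply (dF \<omega>) (J h))) (at \<omega> within \<Omega>0)"
  shows "(\<exists>C>0. \<exists>\<sigma>'>0. \<exists>\<theta>. 0 < \<theta> \<and> \<theta> \<le> 1/2 \<and>
            (\<forall>\<omega>\<in>\<Omega>0. norm (\<omega> - \<omega>bar) \<le> \<sigma>' \<longrightarrow>
               \<bar>E (\<omega> + \<psi> \<omega>) - E (\<omega>bar + \<psi> \<omega>bar)\<bar> powr (1 - \<theta>)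
                 \<le> C * dual_norm_on (closure (J ` V0)) (blinfun_apply (dF \<omega>))))
     \<longleftrightarrow>
         (\<exists>C>0. \<exists>\<sigma>>0. \<exists>\<theta>. 0 < \<theta> \<and> \<theta> \<le> 1/2 \<and>
            (\<forall>u\<in>M. norm (u - ubar) \<le> \<sigma> \<longrightarrow>
               \<bar>E u - E ubar\<bar> powr (1 - \<theta>)
                 \<le> C * dual_norm_on (closure (J ` tangent_space M \<Omega> u)) (blinfun_apply (dE u))))"
proof -
  interpret constrained_energy J U M \<Omega> \<Omega>0 \<Omega>1 V0 V1 G dG ubar \<psi> E dE dF
    by (intro constrained_energy.intro constraint_chart.intro constrained_energy_axioms.intro)
      (fact J(1) U M_def dG dG_an V0_def V1(1) \<Omega>0(2) \<Omega>1(2) \<Omega>_def \<Omega>U \<psi>_an \<psi>_img M\<Omega> iso dE dF)+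
  obtain c where c: "c > 0" "\<And>\<omega>. \<omega> \<in> \<Omega>0 \<Longrightarrow> tangent_dual_norm (\<omega> + \<psi> \<omega>) \<le> c * V0_dual_norm \<omega>"
    using tangent_dual_norm_le by blast
  obtain \<delta> where \<delta>: "\<delta> > 0"
    "\<And>u. u \<in> M \<Longrightarrow> norm (u - ubar) \<le> \<delta> \<Longrightarrow> u \<in> \<Omega> \<and> V0_dual_norm (P0 u) \<le> 2 * tangent_dual_norm u"
    using V0_dual_norm_le_near by blast
  have "lojasiewicz_ineq \<Omega>0 \<omega>bar (\<lambda>\<omega>. E (\<omega> + \<psi> \<omega>)) V0_dual_norm \<longleftrightarrow> lojasiewicz_ineq M ubar E tangent_dual_norm"
  proof
    assume "lojasiewicz_ineq \<Omega>0 \<omega>bar (\<lambda>\<omega>. E (\<omega> + \<psi> \<omega>)) V0_dual_norm"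
    then show "lojasiewicz_ineq M ubar E tangent_dual_norm"
    proof (rule lojasiewicz_ineq_pullback[where p = P0 and \<delta> = \<delta>])
      show "continuous (at ubar within M) P0" by (rule linear_continuous_within[OF bounded_linear_P0])
      show "P0 ubar = \<omega>bar" using P0_chart[OF \<omega>bar(1)] \<omega>bar(2) by simp
      show "ubar \<in> M" using M_def ubar_\<Omega> \<Omega>_U G_ubar by auto
      fix u assume "u \<in> M" "norm (u - ubar) \<le> \<delta>"
      then show "P0 u \<in> \<Omega>0 \<and> E (P0 u + \<psi> (P0 u)) = E u \<and> V0_dual_norm (P0 u) \<le> 2 * tangent_dual_norm u"
        using \<delta>(2) chart_P0 by auto
    qed (use \<delta>(1) in simp_all)
  next
    assume "lojasiewicz_ineq M ubar E tangent_dual_norm"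
    then show "lojasiewicz_ineq \<Omega>0 \<omega>bar (\<lambda>\<omega>. E (\<omega> + \<psi> \<omega>)) V0_dual_norm"
    proof (rule lojasiewicz_ineq_pullback[where p = "\<lambda>\<omega>. \<omega> + \<psi> \<omega>" and \<delta> = 1])
      show "continuous (at \<omega>bar within \<Omega>0) (\<lambda>\<omega>. \<omega> + \<psi> \<omega>)"
        by (rule has_derivative_continuous[OF chart_has_derivative[OF \<omega>bar(1)]])
    qed (use c \<omega>bar chart_in_M in auto)
  qed
  then show ?thesis unfolding lojasiewicz_ineq_def V0_dual_norm_def tangent_dual_norm_def .
qed

end
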